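(* Let $T$ be a pre-truss and let $P$ be a paragon in $T$. Then $P$ is a completely prime paragon if and only if the quotient pre-truss $T/P$ is a domain.
   Context: A heap is a set with a ternary operation $[-,-,-]$ satisfying $[a_1,a_2,[a_3,a_4,a_5]]=[[a_1,a_2,a_3],a_4,a_5]$ and $[a,a,b]=b=[b,a,a]$. A normal sub-heap of $H$ is a non-empty subset $S$ closed under $[-,-,-]$ with $[[a,e,s],a,e]\in S$ for all $a\in H$, $e,s\in S$; $a\sim_S b$ iff $[a,b,s]\in S$ for some (equivalently all) $s\in S$. A pre-truss is a heap with an associative binary operation (juxtaposition). A sub-heap $S$ is closed if $[ts',ts,s]\in S$ and $[s't,st,s]\in S$ for all $s,s'\in S$, $t\in T$. A paragon is a non-empty normal sub-heap $P$ all of whose $\sim_P$-classes are closed sub-heaps; $T/P$ is then a pre-truss with $\bar a\bar b=\overline{ab}$. An ideal is a normal sub-heap $I$ with $ti\in I$ and $it\in I$ for all $t\in T$, $i\in I$. An element $a$ is an absorber if $ta=a=at$ for all $t$; it is unique if it exists, and $T^{\mathrm{Abs}}$ denotes $T$ minus its absorber (or $T$ itself if there is none). An element $a\in T^{\mathrm{Abs}}$ is regular if for all $b\neq c$ in $T$, $ab\neq ac$ and $ba\neq ca$. A pre-truss is a domain if all elements of $T^{\mathrm{Abs}}$ are regular. For $p\in P$, $a\in T$ write $P_p^a=\{[q,p,a]\mid q\in P\}$. A non-empty paragon $P$ is completely prime if for all $p\in P$ and $a,b,c\in T$: $[ab,ac,p]\in P$ implies that $P_p^a$ is an ideal or $[b,c,p]\in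 P$; and $[ba,ca,p]\in P$ implies that $P_p^a$ is an ideal or $[b,c,p]\in P$. *)

theory Defs
  imports Main
begin

text \<open>A pre-truss is modelled on a type 'a: the heap operation is a ternary
function h (h a b c = [a,b,c]) and juxtaposition is a binary function m.\<close>

definition heap :: "('a \<Rightarrow> 'a \<Rightarrow> 'a \<Rightarrow> 'a) \<Rightarrow> bool" where
  "heap h \<longleftrightarrow>
     (\<forall>a1 a2 a3 a4 a5. h a1 a2 (h a3 a4 a5) = h (h a1 a2 a3) a4 a5) \<and>
     (\<forall>a b. h a a b = b \<and> h b a a = b)"

definition pretruss :: "('a \<Rightarrow> 'a \<Rightarrow> 'a \<Rightarrow> 'a) \<Rightarrow> ('a \<Rightarrow> 'a \<Rightarrow> 'a) \<Rightarrow> bool" where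
  "pretruss h m \<longleftrightarrow> heap h \<and> (\<forall>a b c. m (m a b) c = m a (m b c))"

definition subheap_closed :: "('a \<Rightarrow> 'a \<Rightarrow> 'a \<Rightarrow> 'a) \<Rightarrow> 'a set \<Rightarrow> bool" where
  "subheap_closed h S \<longleftrightarrow> (\<forall>a\<in>S. \<forall>b\<in>S. \<forall>c\<in>S. h a b c \<in> S)"

definition normal_subheap :: "('a \<Rightarrow> 'a \<Rightarrow> 'a \<Rightarrow> 'a) \<Rightarrow> 'a set \<Rightarrow> bool" where
  "normal_subheap h S \<longleftrightarrow> S \<noteq> {} \<and> subheap_closed h S \<and>
     (\<forall>a. \<forall>e\<in>S. \<forall>s\<in>S. h (h a e s) a e \<in> S)"

definition heap_sim :: "('a \<Rightarrow> 'a \<Rightarrow> 'a \<Rightarrow> 'a) \<Rightarrow> 'a set \<Rightarrow> 'a \<Rightarrow> 'a \<Rightarrow> bool" where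
  "heap_sim h S a b \<longleftrightarrow> (\<exists>s\<in>S. h a b s \<in> S)"

definition cls :: "('a \<Rightarrow> 'a \<Rightarrow> 'a \<Rightarrow> 'a) \<Rightarrow> 'a set \<Rightarrow> 'a \<Rightarrow> 'a set" where
  "cls h S a = {b. heap_sim h S a b}"

definition closed_subheap :: "('a \<Rightarrow> 'a \<Rightarrow> 'a \<Rightarrow> 'a) \<Rightarrow> ('a \<Rightarrow> 'a \<Rightarrow> 'a) \<Rightarrow> 'a set \<Rightarrow> bool" where
  "closed_subheap h m S \<longleftrightarrow> S \<noteq> {} \<and> subheap_closed h S \<and>
     (\<forall>s\<in>S. \<forall>s'\<in>S. \<forall>t. h (m t s') (m t s) s \<in> S \<and> h (m s' t) (m s t) s \<in> S)"

definition paragon :: "('a \<Rightarrow> 'a \<Rightarrow> 'a \<Rightarrow> 'a) \<Rightarrow> ('a \<Rightarrow> 'a \<Rightarrow> 'a) \<Rightarrow> 'a set \<Rightarrow> bool" where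
  "paragon h m P \<longleftrightarrow> P \<noteq> {} \<and> normal_subheap h P \<and> (\<forall>a. closed_subheap h m (cls h P a))"

definition ideal :: "('a \<Rightarrow> 'a \<Rightarrow> 'a \<Rightarrow> 'a) \<Rightarrow> ('a \<Rightarrow> 'a \<Rightarrow> 'a) \<Rightarrow> 'a set \<Rightarrow> bool" where
  "ideal h m I \<longleftrightarrow> normal_subheap h I \<and> (\<forall>t. \<forall>i\<in>I. m t i \<in> I \<and> m i t \<in> I)"

definition Ppa :: "('a \<Rightarrow> 'a \<Rightarrow> 'a \<Rightarrow> 'a) \<Rightarrow> 'a set \<Rightarrow> 'a \<Rightarrow> 'a \<Rightarrow> 'a set" where
  "Ppa h P p a = {h q p a | q. q \<in> P}"

definition completely_prime :: "('a \<Rightarrow> 'a \<Rightarrow> 'a \<Rightarrow> 'a) \<Rightarrow> ('a \<Rightarrow> 'a \<Rightarrow> 'a) \<Rightarrow> 'a set \<Rightarrow> bool" where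
  "completely_prime h m P \<longleftrightarrow> P \<noteq> {} \<and> paragon h m P \<and>
     (\<forall>p\<in>P. \<forall>a b c.
        (h (m a b) (m a c) p \<in> P \<longrightarrow> ideal h m (Ppa h P p a) \<or> h b c p \<in> P) \<and>
        (h (m b a) (m c a) p \<in> P \<longrightarrow> ideal h m (Ppa h P p a) \<or> h b c p \<in> P))"

definition quot :: "('a \<Rightarrow> 'a \<Rightarrow> 'a \<Rightarrow> 'a) \<Rightarrow> 'a set \<Rightarrow> 'a set set" where
  "quot h P = range (cls h P)"

definition qmult :: "('a \<Rightarrow> 'a \<Rightarrow> 'a \<Rightarrow> 'a) \<Rightarrow> ('a \<Rightarrow> 'a \<Rightarrow> 'a) \<Rightarrow> 'a set
                      \<Rightarrow> 'a set \<Rightarrow> 'a set \<Rightarrow> 'a set" where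
  "qmult h m P X Y = cls h P (m (SOME a. a \<in> X) (SOME b. b \<in> Y))"

definition absorber :: "'b set \<Rightarrow> ('b \<Rightarrow> 'b \<Rightarrow> 'b) \<Rightarrow> 'b \<Rightarrow> bool" where
  "absorber C mult z \<longleftrightarrow> z \<in> C \<and> (\<forall>t\<in>C. mult t z = z \<and> mult z t = z)"

definition abs_removed :: "'b set \<Rightarrow> ('b \<Rightarrow> 'b \<Rightarrow> 'b) \<Rightarrow> 'b set" where
  "abs_removed C mult = {a \<in> C. \<not> absorber C mult a}"

definition regular :: "'b set \<Rightarrow> ('b \<Rightarrow> 'b \<Rightarrow> 'b) \<Rightarrow> 'b \<Rightarrow> bool" where
  "regular C mult a \<longleftrightarrow> a \<in> abs_removed C mult \<and>
     (\<forall>b\<in>C. \<forall>c\<in>C. b \<noteq> c \<longrightarrow> mult a b \<noteq> mult a c \<and> mult b a \<noteq> mult c a)"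

definition is_domain :: "'b set \<Rightarrow> ('b \<Rightarrow> 'b \<Rightarrow> 'b) \<Rightarrow> bool" where
  "is_domain C mult \<longleftrightarrow> (\<forall>a\<in>abs_removed C mult. regular C mult a)"

end

theory Submission
  imports Defs
begin

text \<open>Because every \<open>\<sim>\<^sub>P\<close>-class is a closed sub-heap, \<open>\<sim>\<^sub>P\<close> is a congruence for
  juxtaposition. Hence a class is the absorber of \<open>T/P\<close> exactly when it is an ideal of \<open>T\<close>,
  and cancelling the class of \<open>a\<close> in \<open>T/P\<close> means passing from \<open>ab \<sim>\<^sub>P ac\<close> (or
  \<open>ba \<sim>\<^sub>P ca\<close>) to \<open>b \<sim>\<^sub>P c\<close>. On the other side, \<open>P\<^sub>p\<^sup>a\<close> is just the class of \<open>a\<close> and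
  \<open>[x,y,p] \<in> P\<close> just says \<open>x \<sim>\<^sub>P y\<close>, so complete primeness becomes the same condition on
  representatives.\<close>

locale heap_op =
  fixes h :: "'a \<Rightarrow> 'a \<Rightarrow> 'a \<Rightarrow> 'a"
  assumes heap: "heap h"
begin

lemma heap_assoc: "h (h a b c) d e = h a b (h c d e)"
  using heap unfolding heap_def by simp

lemma heap_cancel_left [simp]: "h a a x = x"
  using heap unfolding heap_def by simp

lemma heap_cancel_right [simp]: "h x a a = x"
  using heap unfolding heap_def by simp

lemma heap_cancel_inner [simp]: "h a b (h b c d) = h a c d"
  by (metis heap_assoc heap_cancel_right)

lemma heap_middle_swap: "h a (h b c d) e = h a d (h c b e)"
proof -
  have "h c b e = h (h c b (h b c d)) (h b c d) e"
    by (metis heap_assoc heap_cancel_left)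
  also have "\<dots> = h d (h b c d) e"
    by simp
  finally show ?thesis
    by (metis heap_assoc heap_cancel_right)
qed

end

locale sub_heap = heap_op h for h :: "'a \<Rightarrow> 'a \<Rightarrow> 'a \<Rightarrow> 'a" +
  fixes S :: "'a set"
  assumes nonempty: "S \<noteq> {}"
    and closed: "a \<in> S \<Longrightarrow> b \<in> S \<Longrightarrow> c \<in> S \<Longrightarrow> h a b c \<in> S"
begin

lemma heap_sim_iff: "p \<in> S \<Longrightarrow> heap_sim h S a b \<longleftrightarrow> h a b p \<in> S"
proof
  assume "p \<in> S" and "heap_sim h S a b"
  then obtain s where "s \<in> S" "h a b s \<in> S"
    unfolding heap_sim_def by blast
  with \<open>p \<in> S\<close> have "h (h a b s) s p \<in> S"
    using closed by blast
  then show "h a b p \<in> S"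
    by (simp add: heap_assoc)
qed (auto simp: heap_sim_def)

lemma heap_sim_refl: "heap_sim h S a a"
  using nonempty by (auto simp: heap_sim_def)

lemma heap_sim_sym: "heap_sim h S a b \<Longrightarrow> heap_sim h S b a"
proof -
  obtain p where p: "p \<in> S"
    using nonempty by blast
  assume "heap_sim h S a b"
  with p have "h p (h a b p) p \<in> S"
    using closed heap_sim_iff by blast
  then have "h b a p \<in> S"
    by (simp add: heap_middle_swap)
  with p show ?thesis
    using heap_sim_iff by blast
qed

lemma heap_sim_trans: "heap_sim h S a b \<Longrightarrow> heap_sim h S b c \<Longrightarrow> heap_sim h S a c"
proof -
  obtain p where p: "p \<in> S"
    using nonempty by blast
  assume "heap_sim h S a b" "heap_sim h S b c"
  with p have "h (h a b p) p (h b c p) \<in> S"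
    using closed heap_sim_iff by blast
  then have "h a c p \<in> S"
    by (simp add: heap_assoc)
  with p show ?thesis
    using heap_sim_iff by blast
qed

lemma mem_cls_iff: "b \<in> cls h S a \<longleftrightarrow> heap_sim h S a b"
  by (simp add: cls_def)

lemma cls_self: "a \<in> cls h S a"
  by (simp add: mem_cls_iff heap_sim_refl)

lemma cls_eq_iff: "cls h S a = cls h S b \<longleftrightarrow> heap_sim h S a b"
  unfolding cls_def using heap_sim_refl heap_sim_sym heap_sim_trans by blast

lemma Ppa_eq_cls:
  assumes p: "p \<in> S"
  shows "Ppa h S p a = cls h S a"
proof (rule set_eqI)
  fix b
  have "b \<in> Ppa h S p a \<longleftrightarrow> (\<exists>q\<in>S. b = h q p a)"
    unfolding Ppa_def by blast
  also have "\<dots> \<longleftrightarrow> h b a p \<in> S"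
  proof
    assume "\<exists>q\<in>S. b = h q p a"
    with p show "h b a p \<in> S"
      by (auto simp: heap_assoc)
  next
    assume "h b a p \<in> S"
    moreover have "b = h (h b a p) p a"
      by (simp add: heap_assoc)
    ultimately show "\<exists>q\<in>S. b = h q p a"
      by blast
  qed
  also have "\<dots> \<longleftrightarrow> b \<in> cls h S a"
    using p heap_sim_iff heap_sim_sym mem_cls_iff by blast
  finally show "b \<in> Ppa h S p a \<longleftrightarrow> b \<in> cls h S a" .
qed

end

locale normal_sub_heap = sub_heap +
  assumes normal: "e \<in> S \<Longrightarrow> s \<in> S \<Longrightarrow> h (h x e s) x e \<in> S"
begin

lemma normal_subheap_cls: "normal_subheap h (cls h S a)"
  unfolding normal_subheap_def subheap_closed_def
proof (intro conjI ballI allI)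
  show "cls h S a \<noteq> {}"
    using cls_self by blast
next
  fix x y z
  assume "x \<in> cls h S a" "y \<in> cls h S a" "z \<in> cls h S a"
  then have "heap_sim h S a x" "heap_sim h S y x" "heap_sim h S x z"
    using mem_cls_iff heap_sim_sym heap_sim_trans by blast+
  obtain p where p: "p \<in> S"
    using nonempty by blast
  have "h (h x z p) p (h y x p) \<in> S"
    using closed p \<open>heap_sim h S y x\<close> \<open>heap_sim h S x z\<close> heap_sim_iff by blast
  then have "h x (h x y z) p \<in> S"
    by (simp add: heap_assoc heap_middle_swap)
  then show "h x y z \<in> cls h S a"
    using p heap_sim_iff \<open>heap_sim h S a x\<close> heap_sim_trans mem_cls_iff by blast
next
  fix x e s
  assume "e \<in> cls h S a" "s \<in> cls h S a"
  then have "heap_sim h S a e" "heap_sim h S e s"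
    using mem_cls_iff heap_sim_sym heap_sim_trans by blast+
  obtain p where p: "p \<in> S"
    using nonempty by blast
  have "h e s p \<in> S"
    using p \<open>heap_sim h S e s\<close> heap_sim_iff by blast
  then have "h (h (h x s p) p (h e s p)) (h x s p) p \<in> S"
    using normal p by blast
  then have "h e (h (h x e s) x e) p \<in> S"
    by (simp add: heap_assoc heap_middle_swap)
  then show "h (h x e s) x e \<in> cls h S a"
    using p heap_sim_iff \<open>heap_sim h S a e\<close> heap_sim_trans mem_cls_iff by blast
qed

end

locale truss_paragon = heap_op h for h :: "'a \<Rightarrow> 'a \<Rightarrow> 'a \<Rightarrow> 'a" +
  fixes m :: "'a \<Rightarrow> 'a \<Rightarrow> 'a" and P :: "'a set"
  assumes paragon: "paragon h m P"

sublocale truss_paragon \<subseteq> normal_sub_heap h P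
  using paragon heap
  by unfold_locales (auto simp: paragon_def normal_subheap_def subheap_closed_def)

context truss_paragon
begin

lemma heap_sim_mult:
  assumes "heap_sim h P a a'"
  shows heap_sim_mult_right: "heap_sim h P (m a t) (m a' t)"
    and heap_sim_mult_left: "heap_sim h P (m t a) (m t a')"
proof -
  obtain p where p: "p \<in> P"
    using nonempty by blast
  have "a \<in> cls h P a'"
    using assms heap_sim_sym mem_cls_iff by blast
  then have "h (m a t) (m a' t) a' \<in> cls h P a'" "h (m t a) (m t a') a' \<in> cls h P a'"
    using paragon cls_self unfolding paragon_def closed_subheap_def by blast+
  then have "h a' (h (m a t) (m a' t) a') p \<in> P" "h a' (h (m t a) (m t a') a') p \<in> P"
    using p heap_sim_iff mem_cls_iff by blast+
  then have "h (m a' t) (m a t) p \<in> P" "h (m t a') (m t a) p \<in> P"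
    by (simp_all add: heap_middle_swap)
  then show "heap_sim h P (m a t) (m a' t)" "heap_sim h P (m t a) (m t a')"
    using p heap_sim_iff heap_sim_sym by blast+
qed

lemma qmult_cls [simp]: "qmult h m P (cls h P a) (cls h P b) = cls h P (m a b)"
proof -
  have "(SOME x. x \<in> cls h P a) \<in> cls h P a" "(SOME y. y \<in> cls h P b) \<in> cls h P b"
    by (rule someI, rule cls_self)+
  then have "heap_sim h P (m a b) (m (SOME x. x \<in> cls h P a) (SOME y. y \<in> cls h P b))"
    using heap_sim_mult heap_sim_trans mem_cls_iff by blast
  then show ?thesis
    unfolding qmult_def using cls_eq_iff by blast
qed

lemma absorber_cls_iff_ideal:
  "absorber (quot h P) (qmult h m P) (cls h P a) \<longleftrightarrow> ideal h m (cls h P a)"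
proof -
  have "absorber (quot h P) (qmult h m P) (cls h P a) \<longleftrightarrow>
      (\<forall>t. heap_sim h P a (m t a) \<and> heap_sim h P a (m a t))"
    by (auto simp: absorber_def quot_def cls_eq_iff heap_sim_sym)
  also have "\<dots> \<longleftrightarrow> (\<forall>t. \<forall>i\<in>cls h P a. m t i \<in> cls h P a \<and> m i t \<in> cls h P a)"
    using cls_self mem_cls_iff heap_sim_mult heap_sim_trans by meson
  finally show ?thesis
    using normal_subheap_cls unfolding ideal_def by blast
qed

lemma completely_prime_iff:
  "completely_prime h m P \<longleftrightarrow>
    (\<forall>a b c. heap_sim h P (m a b) (m a c) \<or> heap_sim h P (m b a) (m c a) \<longrightarrow>
      ideal h m (cls h P a) \<or> heap_sim h P b c)"
  unfolding completely_prime_def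
  using paragon nonempty
  by (simp add: heap_sim_iff[symmetric] Ppa_eq_cls ex_in_conv cong: ball_cong)

lemma regular_cls_iff:
  "regular (quot h P) (qmult h m P) (cls h P a) \<longleftrightarrow> \<not> ideal h m (cls h P a) \<and>
    (\<forall>b c. heap_sim h P (m a b) (m a c) \<or> heap_sim h P (m b a) (m c a) \<longrightarrow> heap_sim h P b c)"
proof -
  have "cls h P a \<in> quot h P"
    by (simp add: quot_def)
  then have "cls h P a \<in> abs_removed (quot h P) (qmult h m P) \<longleftrightarrow> \<not> ideal h m (cls h P a)"
    by (simp add: abs_removed_def absorber_cls_iff_ideal)
  then show ?thesis
    unfolding regular_def by (auto simp: quot_def cls_eq_iff)
qed

lemma is_domain_quot_iff:
  "is_domain (quot h P) (qmult h m P) \<longleftrightarrow>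
    (\<forall>a b c. heap_sim h P (m a b) (m a c) \<or> heap_sim h P (m b a) (m c a) \<longrightarrow>
      ideal h m (cls h P a) \<or> heap_sim h P b c)"
proof -
  have "is_domain (quot h P) (qmult h m P) \<longleftrightarrow>
      (\<forall>a. \<not> ideal h m (cls h P a) \<longrightarrow> regular (quot h P) (qmult h m P) (cls h P a))"
    by (auto simp: is_domain_def abs_removed_def quot_def absorber_cls_iff_ideal[unfolded quot_def])
  then show ?thesis
    by (auto simp: regular_cls_iff)
qed

end

theorem theorem4p10:
  fixes h :: "'a \<Rightarrow> 'a \<Rightarrow> 'a \<Rightarrow> 'a" and m :: "'a \<Rightarrow> 'a \<Rightarrow> 'a" and P :: "'a set"
  assumes "pretruss h m"
    and "paragon h m P"
  shows "completely_prime h m P \<longleftrightarrow> is_domain (quot h P) (qmult h m P)"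
proof -
  interpret truss_paragon h m P
    using assms by unfold_locales (simp_all add: pretruss_def)
  show ?thesis
    by (simp only: completely_prime_iff is_domain_quot_iff)
qed

end
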